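(* For each $k\ge0$, the $k$-th level $C^{(k)}$ of the coradical filtration of $\mathfrak{S}Sym$ has linear basis $\{1\}\cup\{\mathcal{M}_u: u\in\mathfrak{S}_n,\ n\ge1,\ \#\mathrm{GDes}(u)\le k-1\}$. In particular the space of primitive elements of $\mathfrak{S}Sym$ has linear basis $\{\mathcal{M}_u: u\in\mathfrak{S}_n,\ n\ge1,\ \mathrm{GDes}(u)=\emptyset\}$.
   Context: $\mathfrak{S}Sym$ is the Malvenuto–Reutenauer Hopf algebra over $\mathbb{Q}$: basis $\{\mathcal{F}_u:u\in\mathfrak{S}_n,n\ge0\}$ ($\mathcal{F}$ of the empty permutation is $1$), product $\mathcal{F}_u\cdot\mathcal{F}_v=\sum_\zeta\mathcal{F}_{(u\times v)\zeta^{-1}}$ over $\zeta\in\mathfrak{S}_{p+q}$ increasing on $[1,p]$ and on $[p+1,p+q]$ (for $u\in\mathfrak{S}_p,v\in\mathfrak{S}_q$; $(u\times v)(i)=u_i$ for $i\le p$, $(u\times v)(p+j)=p+v_j$; product of permutations is composition), coproduct $\Delta(\mathcal{F}_u)=\sum_{p=0}^n\mathcal{F}_{\mathrm{st}(u_1..u_p)}\otimes\mathcal{F}_{\mathrm{st}(u_{p+1}..u_n)}$, where $\mathrm{st}$ of a sequence of distinct integers is the permutation with the same relative order. Weak order: $u\le v$ iff $\mathrm{Inv}(u)\subseteq\mathrm{Inv}(v)$, Möbius function $\mu$; $\mathcal{M}_u=\sum_{v\ge u}\mu(u,v)\mathcal{F}_v$. $\mathrm{GDes}(u)=\{p\in[n-1]:u_i>u_j\text{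 for all }i\le p<j\}$. Coradical filtration of a graded connected coalgebra $C$: $C^{(0)}=\mathbb{Q}\cdot1$ (degree 0 part), and $C^{(k)}=(\Delta^{(k)})^{-1}\big(\sum_{i+j=k}C^{\otimes i}\otimes C^{(0)}\otimes C^{\otimes j}\big)$, where $\Delta^{(k)}\colon C\to C^{\otimes k+1}$ is the iterated coproduct. An element $x$ is primitive if $\Delta(x)=x\otimes1+1\otimes x$. *)

theory Defs
  imports Complex_Main "HOL-Library.Function_Algebras"
begin

(* a permutation u of [n] is the word u_1 ... u_n, i.e. a list of distinct
   values with set {1..n}; the empty list is the empty permutation *)
definition is_perm :: "nat list \<Rightarrow> bool" where
  "is_perm u \<longleftrightarrow> distinct u \<and> set u = {1..length u}"

definition st :: "nat list \<Rightarrow> nat list" where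
  "st xs = map (\<lambda>x. card {y \<in> set xs. y \<le> x}) xs"

(* inversions (positions, 0-indexed): i < j and u_i > u_j *)
definition Inv :: "nat list \<Rightarrow> (nat \<times> nat) set" where
  "Inv u = {(i, j). i < j \<and> j < length u \<and> u ! i > u ! j}"

definition weak_le :: "nat list \<Rightarrow> nat list \<Rightarrow> bool" where
  "weak_le u v \<longleftrightarrow> is_perm u \<and> is_perm v \<and> length u = length v \<and> Inv u \<subseteq> Inv v"

lemma finite_Inv: "finite (Inv u)"
proof -
  have "Inv u \<subseteq> {..<length u} \<times> {..<length u}" unfolding Inv_def by auto
  then show ?thesis by (rule finite_subset) auto
qed

lemma perm_nth_card:
  assumes p: "is_perm w" and i: "i < length w"
  shows "w ! i = card {j. j < length w \<and> w ! j \<le> w ! i}"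
proof -
  have inj: "inj_on ((!) w) {j. j < length w \<and> w ! j \<le> w ! i}"
    using p unfolding is_perm_def by (auto simp: inj_on_def nth_eq_iff_index_eq)
  have img: "(!) w ` {j. j < length w \<and> w ! j \<le> w ! i} = {x \<in> set w. x \<le> w ! i}"
    by (auto simp: in_set_conv_nth)
  have "{x \<in> set w. x \<le> w ! i} = {1..w ! i}"
    using p i unfolding is_perm_def by (auto dest: nth_mem)
  then show ?thesis using card_image[OF inj] img by simp
qed

function mobius :: "nat list \<Rightarrow> nat list \<Rightarrow> rat" where
  "mobius u v =
     (if u = v \<and> is_perm u then 1
      else if weak_le u v then
        - (\<Sum>w\<in>{w. weak_le u w \<and> weak_le w v \<and> w \<noteq> v}. mobius u w)
      else 0)"
  by auto
termination
proof (relation "measure (\<lambda>(u, v). card (Inv v))")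
  fix u v w
  assume "w \<in> {w. weak_le u w \<and> weak_le w v \<and> w \<noteq> v}"
  then have le: "Inv w \<subseteq> Inv v" and ne: "w \<noteq> v" and lw: "length w = length v"
    and pw: "is_perm w" and pv: "is_perm v"
    unfolding weak_le_def by auto
  have "Inv w \<noteq> Inv v"
  proof
    assume eq: "Inv w = Inv v"
    have "\<forall>i j. i < length v \<and> j < length v \<longrightarrow> (w ! i < w ! j \<longleftrightarrow> v ! i < v ! j)"
    proof (intro allI impI)
      fix i j assume ij: "i < length v \<and> j < length v"
      show "(w ! i < w ! j \<longleftrightarrow> v ! i < v ! j)"
      proof (cases "i = j")
        case True then show ?thesis by simp
      next
        case False
        have dw: "w ! i \<noteq> w ! j" using pw ij False lw unfolding is_perm_def
          by (simp add: nth_eq_iff_index_eq)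
        have dv: "v ! i \<noteq> v ! j" using pv ij False unfolding is_perm_def
          by (simp add: nth_eq_iff_index_eq)
        show ?thesis
        proof (cases "i < j")
          case True
          have "(i, j) \<in> Inv w \<longleftrightarrow> (i, j) \<in> Inv v" using eq by simp
          then show ?thesis using True ij lw dw dv unfolding Inv_def by auto
        next
          case False
          then have "j < i" using \<open>i \<noteq> j\<close> by simp
          have "(j, i) \<in> Inv w \<longleftrightarrow> (j, i) \<in> Inv v" using eq by simp
          then show ?thesis using \<open>j < i\<close> ij lw dw dv unfolding Inv_def by auto
        qed
      qed
    qed
    moreover have "w = v"
    proof (rule nth_equalityI)
      show "length w = length v" by (rule lw)
    next
      fix i assume i: "i < length w"
      have "{j. j < length w \<and> w ! j \<le> w ! i} = {j. j < length v \<and> v ! j \<le> v ! i}"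
        using calculation i lw by (auto simp: not_less[symmetric])
      then show "w ! i = v ! i"
        using perm_nth_card[OF pw i] perm_nth_card[OF pv] i lw by simp
    qed
    ultimately show False using ne by simp
  qed
  then show "((u, w), u, v) \<in> measure (\<lambda>(u, v). card (Inv v))"
    using le finite_Inv[of v] by (simp add: psubset_card_mono psubsetI)
qed auto


(* elements of SSym: finitely supported Q-valued functions on permutations;
   the coefficient of F_u in x is x u *)
definition SSym :: "(nat list \<Rightarrow> rat) set" where
  "SSym = {x. finite {a. x a \<noteq> 0} \<and> (\<forall>a. x a \<noteq> 0 \<longrightarrow> is_perm a)}"

(* elements of the tensor power SSym^{\<otimes> m}: finitely supported functions on
   m-tuples (lists of length m) of permutations; coefficient of F_{t1}\<otimes>...\<otimes>F_{tm} *)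
definition tensor_pow :: "nat \<Rightarrow> (nat list list \<Rightarrow> rat) set" where
  "tensor_pow m = {y. finite {t. y t \<noteq> 0} \<and>
      (\<forall>t. y t \<noteq> 0 \<longrightarrow> length t = m \<and> (\<forall>a\<in>set t. is_perm a))}"

definition scaleQ :: "rat \<Rightarrow> ('a \<Rightarrow> rat) \<Rightarrow> 'a \<Rightarrow> rat" where
  "scaleQ c f = (\<lambda>a. c * f a)"

definition FF :: "'a \<Rightarrow> 'a \<Rightarrow> rat" where
  "FF u = (\<lambda>v. if v = u then 1 else 0)"

definition one :: "nat list \<Rightarrow> rat" where
  "one = FF []"

definition linext :: "('a \<Rightarrow> 'b \<Rightarrow> rat) \<Rightarrow> ('a \<Rightarrow> rat) \<Rightarrow> 'b \<Rightarrow> rat" where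
  "linext f x = (\<lambda>b. \<Sum>a\<in>{a. x a \<noteq> 0}. x a * f a b)"

definition coprod :: "(nat list \<Rightarrow> rat) \<Rightarrow> nat list list \<Rightarrow> rat" where
  "coprod = linext (\<lambda>u. \<lambda>t. \<Sum>p\<in>{0..length u}. FF [st (take p u), st (drop p u)] t)"

definition tensor2 :: "(nat list \<Rightarrow> rat) \<Rightarrow> (nat list \<Rightarrow> rat) \<Rightarrow> nat list list \<Rightarrow> rat" where
  "tensor2 x y = (\<lambda>t. case t of [a, b] \<Rightarrow> x a * y b | _ \<Rightarrow> 0)"

(* id^{\<otimes> m} \<otimes> Delta on a basis tensor F_{t1}\<otimes>...\<otimes>F_{t(m+1)} *)
definition id_tensor_coprod_basis :: "nat list list \<Rightarrow> nat list list \<Rightarrow> rat" where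
  "id_tensor_coprod_basis t = (\<lambda>s. if t \<noteq> [] \<and> length s = length t + 1 \<and> take (length t - 1) s = butlast t
        then coprod (FF (last t)) (drop (length t - 1) s) else 0)"

(* iterated coproduct Delta^{(k)} : SSym \<rightarrow> SSym^{\<otimes>(k+1)};
   Delta^{(0)} = id, Delta^{(k+1)} = (id^{\<otimes>k} \<otimes> Delta) \<circ> Delta^{(k)} *)
fun iter_coprod :: "nat \<Rightarrow> (nat list \<Rightarrow> rat) \<Rightarrow> nat list list \<Rightarrow> rat" where
  "iter_coprod 0 x = (\<lambda>t. case t of [a] \<Rightarrow> x a | _ \<Rightarrow> 0)"
| "iter_coprod (Suc k) x = linext id_tensor_coprod_basis (iter_coprod k x)"

definition coradical0 :: "(nat list \<Rightarrow> rat) set" where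
  "coradical0 = {scaleQ c one | c. True}"

(* C^{\<otimes> i} \<otimes> C^{(0)} \<otimes> C^{\<otimes> j} inside C^{\<otimes> (i+j+1)}: the span of the basis tensors
   whose (i+1)-st factor is F_{empty} = 1 *)
definition slot_unit :: "nat \<Rightarrow> nat \<Rightarrow> (nat list list \<Rightarrow> rat) set" where
  "slot_unit i j = module.span scaleQ
     {FF t | t. length t = i + j + 1 \<and> (\<forall>a\<in>set t. is_perm a) \<and> t ! i = []}"

definition unit_sum :: "nat \<Rightarrow> (nat list list \<Rightarrow> rat) set" where
  "unit_sum k = {\<lambda>t. \<Sum>i\<in>{0..k}. y i t | y. \<forall>i\<in>{0..k}. y i \<in> slot_unit i (k - i)}"

(* C^{(k)} = (Delta^{(k)})^{-1}(sum_{i+j=k} C^{\<otimes> i} \<otimes> C^{(0)} \<otimes> C^{\<otimes> j});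
   for k = 0 this is C^{(0)} *)
definition coradical :: "nat \<Rightarrow> (nat list \<Rightarrow> rat) set" where
  "coradical k = (if k = 0 then coradical0 else {x \<in> SSym. iter_coprod k x \<in> unit_sum k})"

definition primitives :: "(nat list \<Rightarrow> rat) set" where
  "primitives = {x \<in> SSym. coprod x = (\<lambda>t. tensor2 x one t + tensor2 one x t)}"

definition MM :: "nat list \<Rightarrow> nat list \<Rightarrow> rat" where
  "MM u = (\<lambda>v. if weak_le u v then mobius u v else 0)"

(* GDes(u) = {p \<in> [n-1]. u_i > u_j for all i \<le> p < j}  (1-indexed positions) *)
definition GDes :: "nat list \<Rightarrow> nat set" where
  "GDes u = {p \<in> {1..length u - 1}. \<forall>i j. 1 \<le> i \<and> i \<le> p \<and> p < j \<and> j \<le> length u \<longrightarrow>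
                u ! (i - 1) > u ! (j - 1)}"

end

theory Submission
  imports Defs
begin

text \<open>
  Write \<open>x = \<Sum>\<^sub>w \<langle>x\<rangle>\<^sub>w \<M>\<^sub>w\<close>. Moebius inversion gives \<open>\<langle>x\<rangle>\<^sub>w = \<Sum>\<^sub>v\<^sub>\<le>\<^sub>w x\<^sub>v\<close>, a
  unitriangular transform of the coefficients of \<open>x\<close>; so the \<open>\<M>\<^sub>u\<close> are independent and those with
  \<open>u \<in> S\<close> span the elements whose monomial coordinates are supported in \<open>S\<close>. The interval of the
  weak order below \<open>a \ b\<close> is the product of the intervals below \<open>a\<close> and \<open>b\<close>, which makes the
  coproduct dual to this product in monomial coordinates: the coordinate of \<open>\<Delta>\<^sup>(\<^sup>k\<^sup>)x\<close> at
  \<open>\<M>\<^sub>t\<^sub>1 \<otimes> \<dots> \<otimes> \<M>\<^sub>t\<^sub>k\<^sub>+\<^sub>1\<close> is \<open>\<langle>x\<rangle>\<close> at \<open>t\<^sub>1 \ \<dots> \ t\<^sub>k\<^sub>+\<^sub>1\<close>. A tensor lies in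
  \<open>\<Sum>\<^sub>i\<^sub>+\<^sub>j\<^sub>=\<^sub>k C\<^sup>\<otimes>\<^sup>i \<otimes> C\<^sup>(\<^sup>0\<^sup>) \<otimes> C\<^sup>\<otimes>\<^sup>j\<close> iff it has no component on tuples of nonempty
  permutations, and by unitriangularity again the same holds for its monomial coordinates.
  Finally, \<open>w\<close> factors as \<open>t\<^sub>1 \ \<dots> \ t\<^sub>k\<^sub>+\<^sub>1\<close> with all \<open>t\<^sub>i\<close> nonempty exactly when it has at
  least \<open>k\<close> global descents. Hence \<open>x \<in> C\<^sup>(\<^sup>k\<^sup>)\<close> iff \<open>\<langle>x\<rangle>\<^sub>w = 0\<close> whenever \<open>#GDes(w) \<ge> k\<close>.
  The primitives are the elements of \<open>C\<^sup>(\<^sup>1\<^sup>)\<close> with zero counit, i.e. with no \<open>\<M>\<^sub>\<emptyset> = 1\<close> term.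
\<close>

interpretation Q: module "scaleQ :: rat \<Rightarrow> ('a \<Rightarrow> rat) \<Rightarrow> ('a \<Rightarrow> rat)"
  by standard (auto simp: scaleQ_def fun_eq_iff algebra_simps)

section \<open>Finitely supported functions and linear extension\<close>

lemma sum_fun_apply: "(\<Sum>i\<in>I. f i) x = (\<Sum>i\<in>I. f i x)"
  by (induction I rule: infinite_finite_induct) auto

lemma scaleQ_apply [simp]: "scaleQ c f a = c * f a"
  by (simp add: scaleQ_def)

lemma FF_apply: "FF u v = (if v = u then 1 else 0)"
  by (simp add: FF_def)

lemma finite_support_FF [simp]: "finite {a. FF u a \<noteq> 0}"
  by (rule finite_subset[of _ "{u}"]) (auto simp: FF_apply)

lemma linext_eq_sum_superset:
  assumes "finite A" "{a. x a \<noteq> 0} \<subseteq> A"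
  shows "linext f x b = (\<Sum>a\<in>A. x a * f a b)"
  unfolding linext_def using assms by (intro sum.mono_neutral_left) auto

lemma linext_nonzeroE:
  assumes "linext f x b \<noteq> 0"
  obtains a where "x a \<noteq> 0" "f a b \<noteq> 0"
  using assms unfolding linext_def by (auto elim: sum.not_neutral_contains_not_neutral)

lemma linext_FF [simp]: "linext f (FF u) = f u"
  by (rule ext, subst linext_eq_sum_superset[of "{u}"]) (auto simp: FF_apply)

lemma finite_support_linext:
  assumes "finite {a. x a \<noteq> 0}" "\<And>a. finite {b. f a b \<noteq> 0}"
  shows "finite {b. linext f x b \<noteq> 0}"
proof (rule finite_subset)
  show "{b. linext f x b \<noteq> 0} \<subseteq> (\<Union>a\<in>{a. x a \<noteq> 0}. {b. f a b \<noteq> 0})"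
    by (auto elim: linext_nonzeroE)
qed (use assms in auto)

lemma finite_support_sum:
  assumes "finite I" "\<And>i. i \<in> I \<Longrightarrow> finite {a. g i a \<noteq> (0::rat)}"
  shows "finite {a. (\<Sum>i\<in>I. g i) a \<noteq> 0}"
proof (rule finite_subset)
  show "{a. (\<Sum>i\<in>I. g i) a \<noteq> 0} \<subseteq> (\<Union>i\<in>I. {a. g i a \<noteq> 0})"
    by (auto simp: sum_fun_apply elim: sum.not_neutral_contains_not_neutral)
qed (use assms in auto)

lemma linext_sum:
  assumes "finite I" "\<And>i. i \<in> I \<Longrightarrow> finite {a. g i a \<noteq> (0::rat)}"
  shows "linext f (\<Sum>i\<in>I. g i) = (\<Sum>i\<in>I. linext f (g i))"
proof
  fix b
  let ?A = "\<Union>i\<in>I. {a. g i a \<noteq> 0}"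
  have fA: "finite ?A" using assms by auto
  have "linext f (\<Sum>i\<in>I. g i) b = (\<Sum>a\<in>?A. (\<Sum>i\<in>I. g i a) * f a b)"
    using fA by (subst linext_eq_sum_superset[of ?A])
      (auto simp: sum_fun_apply elim: sum.not_neutral_contains_not_neutral)
  also have "\<dots> = (\<Sum>i\<in>I. \<Sum>a\<in>?A. g i a * f a b)"
    by (simp add: sum_distrib_right sum.swap[of _ ?A])
  also have "\<dots> = (\<Sum>i\<in>I. linext f (g i) b)"
    using fA by (intro sum.cong refl, subst linext_eq_sum_superset[of ?A]) auto
  finally show "linext f (\<Sum>i\<in>I. g i) b = (\<Sum>i\<in>I. linext f (g i)) b"
    by (simp add: sum_fun_apply)
qed

lemma linext_comp:
  assumes fy: "finite {a. y a \<noteq> 0}" and ff: "\<And>r. finite {b. f r b \<noteq> 0}"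
  shows "linext g (linext f y) = linext (\<lambda>r. linext g (f r)) y"
proof
  fix b
  let ?R = "{a. y a \<noteq> 0}"
  let ?A = "\<Union>r\<in>?R. {b. f r b \<noteq> 0}"
  have fA: "finite ?A" using fy ff by auto
  have "linext g (linext f y) b = (\<Sum>a\<in>?A. linext f y a * g a b)"
    by (rule linext_eq_sum_superset[OF fA]) (auto elim: linext_nonzeroE)
  also have "\<dots> = (\<Sum>r\<in>?R. y r * (\<Sum>a\<in>?A. f r a * g a b))"
    by (simp add: linext_def sum_distrib_right sum_distrib_left mult.assoc sum.swap[of _ ?A])
  also have "\<dots> = (\<Sum>r\<in>?R. y r * linext g (f r) b)"
  proof (rule sum.cong[OF refl])
    fix r assume "r \<in> ?R"
    then show "y r * (\<Sum>a\<in>?A. f r a * g a b) = y r * linext g (f r) b"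
      using fA by (subst linext_eq_sum_superset[of ?A]) auto
  qed
  also have "\<dots> = linext (\<lambda>r. linext g (f r)) y b" by (simp add: linext_def)
  finally show "linext g (linext f y) b = linext (\<lambda>r. linext g (f r)) y b" .
qed

lemma in_span_FF:
  assumes "finite {a. y a \<noteq> 0}" "\<And>a. y a \<noteq> 0 \<Longrightarrow> a \<in> A"
  shows "y \<in> Q.span (FF ` A)"
proof -
  let ?S = "{a. y a \<noteq> 0}"
  have "y = (\<Sum>a\<in>?S. scaleQ (y a) (FF a))"
  proof
    fix t
    have "(\<Sum>a\<in>?S. scaleQ (y a) (FF a)) t = (\<Sum>a\<in>?S. if t = a then y a else 0)"
      by (simp add: sum_fun_apply FF_apply if_distrib cong: if_cong)
    then show "y t = (\<Sum>a\<in>?S. scaleQ (y a) (FF a)) t"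
      using assms(1) by simp
  qed
  also have "\<dots> \<in> Q.span (FF ` A)"
    using assms(2) by (intro Q.span_sum Q.span_scale Q.span_base) auto
  finally show ?thesis .
qed

section \<open>Triangular systems\<close>

definition zeta_transform :: "('a \<Rightarrow> 'a \<Rightarrow> bool) \<Rightarrow> ('a \<Rightarrow> rat) \<Rightarrow> 'a \<Rightarrow> rat" where
  "zeta_transform R = linext (\<lambda>s t. of_bool (R s t))"

lemma zeta_transform_vanishes_iff:
  fixes f :: "'a \<Rightarrow> nat"
  assumes fin: "finite {s. y s \<noteq> 0}"
    and down: "\<And>s t. R s t \<Longrightarrow> t \<in> P \<Longrightarrow> s \<in> P"
    and reflexive: "\<And>t. t \<in> P \<Longrightarrow> R t t"
    and graded: "\<And>s t. R s t \<Longrightarrow> s \<noteq> t \<Longrightarrow> t \<in> P \<Longrightarrow> f s < f t"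
  shows "(\<forall>t\<in>P. zeta_transform R y t = 0) \<longleftrightarrow> (\<forall>t\<in>P. y t = 0)"
proof
  assume vanish: "\<forall>t\<in>P. zeta_transform R y t = 0"
  have "y t = 0" if "t \<in> P" for t
    using that
  proof (induction "f t" arbitrary: t rule: less_induct)
    case less
    have "0 = (\<Sum>s\<in>{s. y s \<noteq> 0}. y s * of_bool (R s t))"
      using vanish less.prems by (simp add: zeta_transform_def linext_def)
    also have "\<dots> = (\<Sum>s\<in>{s. y s \<noteq> 0}. if s = t then y s else 0)"
    proof (rule sum.cong[OF refl])
      fix s assume s: "s \<in> {s. y s \<noteq> 0}"
      have "\<not> R s t" if "s \<noteq> t"
        using less s down graded that by fastforce
      then show "y s * of_bool (R s t) = (if s = t then y s else 0)"
        using reflexive less.prems by auto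
    qed
    also have "\<dots> = y t" using fin by simp
    finally show ?case by simp
  qed
  then show "\<forall>t\<in>P. y t = 0" by blast
next
  assume "\<forall>t\<in>P. y t = 0"
  then show "\<forall>t\<in>P. zeta_transform R y t = 0"
    unfolding zeta_transform_def linext_def using down by (fastforce intro: sum.neutral)
qed

section \<open>The weak order\<close>

declare mobius.simps [simp del]

lemma is_perm_Nil [simp]: "is_perm []"
  by (simp add: is_perm_def)

lemma finite_perms_of_length: "finite {v. is_perm v \<and> length v = n}"
proof (rule finite_subset)
  show "{v. is_perm v \<and> length v = n} \<subseteq> {xs. set xs \<subseteq> {1..n} \<and> length xs = n}"
    by (auto simp: is_perm_def)
qed (rule finite_lists_length_eq, simp)

lemma weak_leD: "weak_le u v \<Longrightarrow> is_perm u \<and> is_perm v \<and> length u = length v \<and> Inv u \<subseteq> Inv v"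
  by (simp add: weak_le_def)

lemma finite_weak_le_below: "finite {v. weak_le v w}"
  by (rule finite_subset[OF _ finite_perms_of_length[of "length w"]]) (auto simp: weak_le_def)

lemma weak_le_refl: "is_perm u \<Longrightarrow> weak_le u u"
  by (simp add: weak_le_def)

lemma weak_le_trans: "weak_le u v \<Longrightarrow> weak_le v w \<Longrightarrow> weak_le u w"
  by (auto simp: weak_le_def)

lemma weak_le_Nil_iff: "weak_le [] v \<longleftrightarrow> v = []"
  by (auto simp: weak_le_def is_perm_def)

lemma Inv_inject:
  assumes pw: "is_perm w" and pv: "is_perm v" and len: "length w = length v" and eq: "Inv w = Inv v"
  shows "w = v"
proof -
  have same_order: "w ! i < w ! j \<longleftrightarrow> v ! i < v ! j" if ij: "i < length v" "j < length v" for i j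
  proof -
    have "w ! i \<noteq> w ! j" "v ! i \<noteq> v ! j" if "i \<noteq> j"
      using pw pv ij len that by (simp_all add: is_perm_def nth_eq_iff_index_eq)
    moreover have "(i, j) \<in> Inv w \<longleftrightarrow> (i, j) \<in> Inv v" "(j, i) \<in> Inv w \<longleftrightarrow> (j, i) \<in> Inv v"
      using eq by simp_all
    ultimately show ?thesis
      using ij len by (cases i j rule: linorder_cases) (auto simp: Inv_def)
  qed
  show "w = v"
  proof (rule nth_equalityI)
    fix i assume i: "i < length w"
    have "{j. j < length w \<and> w ! j \<le> w ! i} = {j. j < length v \<and> v ! j \<le> v ! i}"
      using same_order i len by (auto simp: not_less[symmetric])
    then show "w ! i = v ! i"
      using perm_nth_card[OF pw i] perm_nth_card[OF pv] i len by simp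
  qed (rule len)
qed

lemma weak_le_antisym: "weak_le u v \<Longrightarrow> weak_le v u \<Longrightarrow> u = v"
  using Inv_inject by (auto simp: weak_le_def)

lemma weak_le_card_Inv_le: "weak_le u v \<Longrightarrow> card (Inv u) \<le> card (Inv v)"
  using finite_Inv by (auto simp: weak_le_def intro: card_mono)

lemma weak_le_card_Inv_less:
  assumes "weak_le u v" "u \<noteq> v"
  shows "card (Inv u) < card (Inv v)"
proof -
  have "Inv u \<noteq> Inv v" using assms Inv_inject by (auto simp: weak_le_def)
  then show ?thesis using assms finite_Inv[of v]
    by (auto simp: weak_le_def intro: psubset_card_mono)
qed

lemma list_all2_weak_le_perms:
  "list_all2 weak_le s t \<Longrightarrow> length s = length t \<and> (\<forall>a\<in>set s. is_perm a) \<and>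
     ((\<forall>a\<in>set t. a \<noteq> []) \<longrightarrow> (\<forall>a\<in>set s. a \<noteq> []))"
  by (induction rule: list_all2_induct) (auto dest: weak_leD)

lemma list_all2_weak_le_refl: "\<forall>a\<in>set t. is_perm a \<Longrightarrow> list_all2 weak_le t t"
  by (induction t) (auto simp: weak_le_refl)

lemma list_all2_weak_le_card_Inv_less:
  "list_all2 weak_le s t \<Longrightarrow> s \<noteq> t \<Longrightarrow> (\<Sum>a\<leftarrow>s. card (Inv a)) < (\<Sum>a\<leftarrow>t. card (Inv a))"
proof (induction rule: list_all2_induct)
  case (Cons x xs y ys)
  then show ?case
    using weak_le_card_Inv_le[of x y] weak_le_card_Inv_less[of x y]
    by (cases "xs = ys") (auto intro: add_le_less_mono)
qed simp

section \<open>Coordinates in the monomial basis\<close>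

text \<open>\<open>M_coord x w\<close> is the coefficient \<open>\<langle>x\<rangle>\<^sub>w\<close> of \<open>\<M>\<^sub>w\<close> in \<open>x\<close>, because
  \<open>\<F>\<^sub>v = \<Sum>\<^sub>w\<^sub>\<ge>\<^sub>v \<M>\<^sub>w\<close> by Moebius inversion.\<close>

definition M_coord :: "(nat list \<Rightarrow> rat) \<Rightarrow> nat list \<Rightarrow> rat" where
  "M_coord x w = (\<Sum>v | weak_le v w. x v)"

lemma M_coord_eq_zeta_transform:
  assumes "finite {a. x a \<noteq> 0}"
  shows "M_coord x = zeta_transform weak_le x"
proof
  fix w
  have "zeta_transform weak_le x w = (\<Sum>v\<in>{a. x a \<noteq> 0} \<union> {v. weak_le v w}. x v * of_bool (weak_le v w))"
    unfolding zeta_transform_def using assms finite_weak_le_below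
    by (intro linext_eq_sum_superset) auto
  also have "\<dots> = M_coord x w"
    unfolding M_coord_def using assms finite_weak_le_below
    by (intro sum.mono_neutral_cong_right) auto
  finally show "M_coord x w = zeta_transform weak_le x w" by simp
qed

lemma M_coord_add: "M_coord (x + y) = M_coord x + M_coord y"
  by (simp add: M_coord_def fun_eq_iff sum.distrib)

lemma M_coord_diff: "M_coord (x - y) = M_coord x - M_coord y"
  by (simp add: M_coord_def fun_eq_iff sum_subtractf)

lemma M_coord_scaleQ: "M_coord (scaleQ c x) = scaleQ c (M_coord x)"
  by (simp add: M_coord_def fun_eq_iff sum_distrib_left)

lemma M_coord_sum: "M_coord (\<Sum>i\<in>I. g i) = (\<Sum>i\<in>I. M_coord (g i))"
  by (simp add: M_coord_def fun_eq_iff sum_fun_apply sum.swap[of _ I])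

lemma M_coord_Nil: "M_coord x [] = x []"
proof -
  have "{v. weak_le v []} = {[]}"
    using weak_le_Nil_iff weak_le_antisym weak_le_refl by (auto simp: weak_le_def)
  then show ?thesis by (simp add: M_coord_def)
qed

lemma M_coord_nonzero_imp_perm: "M_coord x w \<noteq> 0 \<Longrightarrow> is_perm w"
  unfolding M_coord_def by (auto simp: weak_le_def elim: sum.not_neutral_contains_not_neutral)

lemma mobius_self: "is_perm u \<Longrightarrow> mobius u u = 1"
  by (subst mobius.simps) simp

lemma sum_mobius_interval:
  assumes "weak_le u w"
  shows "(\<Sum>v | weak_le u v \<and> weak_le v w. mobius u v) = of_bool (w = u)"
proof (cases "w = u")
  case True
  then have "{v. weak_le u v \<and> weak_le v w} = {u}"
    using assms weak_le_antisym by blast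
  then show ?thesis using True assms by (simp add: mobius_self weak_leD)
next
  case False
  let ?W = "{v. weak_le u v \<and> weak_le v w \<and> v \<noteq> w}"
  have "finite ?W" by (rule finite_subset[OF _ finite_weak_le_below[of w]]) auto
  moreover have "{v. weak_le u v \<and> weak_le v w} = insert w ?W"
    using assms weak_le_refl weak_leD by blast
  moreover have "mobius u w = - (\<Sum>v\<in>?W. mobius u v)"
    using False assms by (subst mobius.simps) simp
  ultimately show ?thesis using False by simp
qed

lemma M_coord_MM:
  assumes "is_perm u"
  shows "M_coord (MM u) = FF u"
proof
  fix w
  have "M_coord (MM u) w = (\<Sum>v | weak_le u v \<and> weak_le v w. mobius u v)"
    unfolding M_coord_def MM_def using finite_weak_le_below
    by (subst sum.inter_filter[symmetric]) (auto intro: sum.cong)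
  also have "\<dots> = FF u w"
  proof (cases "weak_le u w")
    case True
    then show ?thesis by (simp add: sum_mobius_interval FF_apply)
  next
    case False
    then have empty: "{v. weak_le u v \<and> weak_le v w} = {}" using weak_le_trans by blast
    have "w \<noteq> u" using False weak_le_refl assms by blast
    then show ?thesis unfolding empty by (simp add: FF_apply)
  qed
  finally show "M_coord (MM u) w = FF u w" .
qed

lemma MM_Nil: "MM [] = one"
  by (auto simp: MM_def one_def FF_apply weak_le_Nil_iff mobius_self)

lemma SSym_finite_support: "x \<in> SSym \<Longrightarrow> finite {a. x a \<noteq> 0}"
  by (simp add: SSym_def)

lemma SSym_support_perm: "x \<in> SSym \<Longrightarrow> x a \<noteq> 0 \<Longrightarrow> is_perm a"
  by (simp add: SSym_def)

lemma SSym_add: "x \<in> SSym \<Longrightarrow> y \<in> SSym \<Longrightarrow> x + y \<in> SSym"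
  unfolding SSym_def
  by (auto intro: finite_subset[of _ "{a. x a \<noteq> 0} \<union> {a. y a \<noteq> 0}"]) (metis add.right_neutral)

lemma SSym_diff: "x \<in> SSym \<Longrightarrow> y \<in> SSym \<Longrightarrow> x - y \<in> SSym"
  unfolding SSym_def
  by (auto intro: finite_subset[of _ "{a. x a \<noteq> 0} \<union> {a. y a \<noteq> 0}"]) (metis)

lemma SSym_scaleQ: "x \<in> SSym \<Longrightarrow> scaleQ c x \<in> SSym"
  unfolding SSym_def by (auto intro: finite_subset[of _ "{a. x a \<noteq> 0}"])

lemma SSym_zero: "0 \<in> SSym"
  by (simp add: SSym_def)

lemma SSym_sum: "(\<And>i. i \<in> I \<Longrightarrow> g i \<in> SSym) \<Longrightarrow> (\<Sum>i\<in>I. g i) \<in> SSym"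
  by (induction I rule: infinite_finite_induct) (auto intro: SSym_add SSym_zero)

lemma MM_in_SSym: "MM u \<in> SSym"
proof -
  have supp: "{v. MM u v \<noteq> 0} \<subseteq> {v. is_perm v \<and> length v = length u}"
    by (auto simp: MM_def weak_le_def split: if_splits)
  then show ?thesis
    unfolding SSym_def using finite_subset[OF supp finite_perms_of_length] by blast
qed

lemma finite_support_M_coord:
  assumes "x \<in> SSym"
  shows "finite {w. M_coord x w \<noteq> 0}"
proof (rule finite_subset)
  show "{w. M_coord x w \<noteq> 0} \<subseteq> (\<Union>v\<in>{v. x v \<noteq> 0}. {w. is_perm w \<and> length w = length v})"
  proof
    fix w assume "w \<in> {w. M_coord x w \<noteq> 0}"
    then have "sum x {v. weak_le v w} \<noteq> 0" by (simp add: M_coord_def)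
    then obtain v where "v \<in> {v. weak_le v w}" "x v \<noteq> 0"
      by (rule sum.not_neutral_contains_not_neutral)
    then show "w \<in> (\<Union>v\<in>{v. x v \<noteq> 0}. {w. is_perm w \<and> length w = length v})"
      using weak_leD[of v w] by auto
  qed
  show "finite (\<Union>v\<in>{v. x v \<noteq> 0}. {w. is_perm w \<and> length w = length v})"
    using SSym_finite_support[OF assms] finite_perms_of_length by auto
qed

lemma M_coord_eq_0_imp:
  assumes x: "x \<in> SSym" and "M_coord x = 0"
  shows "x = 0"
proof -
  have "(\<forall>w\<in>{w. is_perm w}. zeta_transform weak_le x w = 0) \<longleftrightarrow> (\<forall>w\<in>{w. is_perm w}. x w = 0)"
  proof (rule zeta_transform_vanishes_iff[where f = "\<lambda>w. card (Inv w)"])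
    show "finite {w. x w \<noteq> 0}" by (rule SSym_finite_support[OF x])
  qed (auto simp: weak_le_refl weak_le_card_Inv_less dest: weak_leD)
  then have "\<forall>w\<in>{w. is_perm w}. x w = 0"
    using assms M_coord_eq_zeta_transform[OF SSym_finite_support[OF x]] by simp
  then show ?thesis using SSym_support_perm[OF x] by fastforce
qed

lemma M_expansion:
  assumes x: "x \<in> SSym"
  shows "x = (\<Sum>w | M_coord x w \<noteq> 0. scaleQ (M_coord x w) (MM w))"
    (is "x = ?y")
proof -
  have "M_coord ?y v = M_coord x v" for v
  proof -
    have "M_coord ?y v = (\<Sum>w | M_coord x w \<noteq> 0. M_coord x w * M_coord (MM w) v)"
      by (simp add: M_coord_sum sum_fun_apply M_coord_scaleQ)
    also have "\<dots> = (\<Sum>w | M_coord x w \<noteq> 0. if v = w then M_coord x w else 0)"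
      using M_coord_nonzero_imp_perm by (intro sum.cong refl) (auto simp: M_coord_MM FF_apply)
    also have "\<dots> = M_coord x v"
      using finite_support_M_coord[OF x] by simp
    finally show ?thesis .
  qed
  moreover have "?y \<in> SSym" by (intro SSym_sum SSym_scaleQ MM_in_SSym)
  ultimately show ?thesis
    using M_coord_eq_0_imp[OF SSym_diff[OF x]] by (simp add: M_coord_diff fun_eq_iff)
qed

lemma span_MM:
  assumes S: "S \<subseteq> {u. is_perm u}"
  shows "Q.span (MM ` S) = {x \<in> SSym. \<forall>w. M_coord x w \<noteq> 0 \<longrightarrow> w \<in> S}"
proof
  show "Q.span (MM ` S) \<subseteq> {x \<in> SSym. \<forall>w. M_coord x w \<noteq> 0 \<longrightarrow> w \<in> S}"
  proof
    fix x assume "x \<in> Q.span (MM ` S)"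
    then show "x \<in> {x \<in> SSym. \<forall>w. M_coord x w \<noteq> 0 \<longrightarrow> w \<in> S}"
    proof (induction rule: Q.span_induct_alt)
      case base
      then show ?case by (simp add: SSym_def M_coord_def)
    next
      case (step c x y)
      then obtain u where u: "u \<in> S" "x = MM u" by auto
      then have "scaleQ c x + y \<in> SSym"
        using step by (auto intro: SSym_add SSym_scaleQ MM_in_SSym)
      moreover have "M_coord (scaleQ c x + y) w \<noteq> 0 \<Longrightarrow> w \<in> S" for w
        using step u S by (auto simp: M_coord_add M_coord_scaleQ M_coord_MM FF_apply split: if_splits)
      ultimately show ?case by blast
    qed
  qed
  show "{x \<in> SSym. \<forall>w. M_coord x w \<noteq> 0 \<longrightarrow> w \<in> S} \<subseteq> Q.span (MM ` S)"
  proof safe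
    fix x assume x: "x \<in> SSym" and xS: "\<forall>w. M_coord x w \<noteq> 0 \<longrightarrow> w \<in> S"
    have "(\<Sum>w | M_coord x w \<noteq> 0. scaleQ (M_coord x w) (MM w)) \<in> Q.span (MM ` S)"
      using xS by (intro Q.span_sum Q.span_scale Q.span_base) auto
    then show "x \<in> Q.span (MM ` S)"
      using M_expansion[OF x] by simp
  qed
qed

lemma inj_on_MM: "inj_on MM {u. is_perm u}"
proof
  fix u v assume "u \<in> {u. is_perm u}" "v \<in> {u. is_perm u}" "MM u = MM v"
  then have "FF u = FF v" using M_coord_MM by (metis mem_Collect_eq)
  then have "FF u u = FF v u" by simp
  then show "u = v" by (simp add: FF_apply split: if_splits)
qed

lemma independent_MM: "Q.independent (MM ` {u. is_perm u})"
proof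
  assume "Q.dependent (MM ` {u. is_perm u})"
  then obtain T c m where T: "finite T" "T \<subseteq> MM ` {u. is_perm u}" "(\<Sum>v\<in>T. scaleQ (c v) v) = 0"
    and m: "m \<in> T" "c m \<noteq> 0"
    unfolding Q.dependent_explicit by blast
  obtain w where w: "is_perm w" "m = MM w" using m T by auto
  have "0 = M_coord (\<Sum>v\<in>T. scaleQ (c v) v) w" using T by (simp add: M_coord_def)
  also have "\<dots> = (\<Sum>v\<in>T. c v * M_coord v w)"
    by (simp add: M_coord_sum sum_fun_apply M_coord_scaleQ)
  also have "\<dots> = (\<Sum>v\<in>T. if v = m then c v else 0)"
  proof (rule sum.cong[OF refl])
    fix v assume "v \<in> T"
    then obtain u where u: "is_perm u" "v = MM u" using T by auto
    then have "v = m \<longleftrightarrow> u = w" using w inj_on_MM by (auto dest: inj_onD)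
    then show "c v * M_coord v w = (if v = m then c v else 0)"
      using u by (auto simp: M_coord_MM FF_apply)
  qed
  also have "\<dots> = c m" using T m by simp
  finally show False using m by simp
qed

section \<open>Shifted concatenation and standardization\<close>

definition over :: "nat list \<Rightarrow> nat list \<Rightarrow> nat list" where
  "over a b = map (\<lambda>x. x + length b) a @ b"

lemma over_Nil_right [simp]: "over a [] = a"
  by (simp add: over_def)

lemma length_over [simp]: "length (over a b) = length a + length b"
  by (simp add: over_def)

lemma nth_over_left: "i < length a \<Longrightarrow> over a b ! i = a ! i + length b"
  by (simp add: over_def nth_append)

lemma nth_over_right: "length a \<le> i \<Longrightarrow> over a b ! i = b ! (i - length a)"
  by (simp add: over_def nth_append)

lemma perm_nth_bounds: "is_perm a \<Longrightarrow> i < length a \<Longrightarrow> 1 \<le> a ! i \<and> a ! i \<le> length a"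
  unfolding is_perm_def using nth_mem by fastforce

lemma is_perm_over:
  assumes a: "is_perm a" and b: "is_perm b"
  shows "is_perm (over a b)"
proof -
  have "set (map (\<lambda>x. x + length b) a) = (\<lambda>x. x + length b) ` {1..length a}"
    using a by (simp add: is_perm_def)
  also have "\<dots> = {length b + 1..length a + length b}"
    by (auto simp: image_iff intro!: bexI[where x = "x - length b" for x])
  finally have "set (map (\<lambda>x. x + length b) a) = {length b + 1..length a + length b}" .
  moreover have "distinct (map (\<lambda>x. x + length b) a)"
    using a by (simp add: is_perm_def distinct_map inj_on_def)
  ultimately show ?thesis
    using b unfolding over_def is_perm_def by auto
qed

definition over_list :: "nat list list \<Rightarrow> nat list" where
  "over_list t = foldr over t []"

lemma over_list_Nil [simp]: "over_list [] = []"
  by (simp add: over_list_def)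

lemma over_list_Cons [simp]: "over_list (a # t) = over a (over_list t)"
  by (simp add: over_list_def)

lemma over_list_append_over: "over_list (T @ [over a b]) = over_list (T @ [a, b])"
  by (simp add: over_list_def)

lemma is_perm_over_list: "\<forall>a\<in>set t. is_perm a \<Longrightarrow> is_perm (over_list t)"
  by (induction t) (auto intro: is_perm_over)

lemma length_st [simp]: "length (st xs) = length xs"
  by (simp add: st_def)

lemma st_eq_Nil_iff [simp]: "st xs = [] \<longleftrightarrow> xs = []"
  by (metis length_0_conv length_st)

lemma Nil_eq_st_iff [simp]: "[] = st xs \<longleftrightarrow> xs = []"
  by (metis st_eq_Nil_iff)

lemma nth_st: "i < length xs \<Longrightarrow> st xs ! i = card {y \<in> set xs. y \<le> xs ! i}"
  by (simp add: st_def)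

lemma st_less_iff:
  assumes i: "i < length xs" and j: "j < length xs"
  shows "st xs ! i < st xs ! j \<longleftrightarrow> xs ! i < xs ! j"
proof
  assume lt: "xs ! i < xs ! j"
  have "xs ! j \<in> {y \<in> set xs. y \<le> xs ! j} - {y \<in> set xs. y \<le> xs ! i}"
    using j lt by auto
  moreover have "{y \<in> set xs. y \<le> xs ! i} \<subseteq> {y \<in> set xs. y \<le> xs ! j}"
    using lt by auto
  ultimately have "{y \<in> set xs. y \<le> xs ! i} \<subset> {y \<in> set xs. y \<le> xs ! j}"
    by blast
  then show "st xs ! i < st xs ! j" using i j by (simp add: nth_st psubset_card_mono)
next
  assume lt: "st xs ! i < st xs ! j"
  show "xs ! i < xs ! j"
  proof (rule ccontr)
    assume "\<not> xs ! i < xs ! j"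
    then have "{y \<in> set xs. y \<le> xs ! j} \<subseteq> {y \<in> set xs. y \<le> xs ! i}" by auto
    then have "st xs ! j \<le> st xs ! i" using i j by (simp add: nth_st card_mono)
    then show False using lt by simp
  qed
qed

lemma is_perm_st:
  assumes d: "distinct xs"
  shows "is_perm (st xs)"
proof -
  have "i = j" if "st xs ! i = st xs ! j" "i < length xs" "j < length xs" for i j
    using that st_less_iff[of i xs j] st_less_iff[of j xs i] d
    by (metis nat_neq_iff nth_eq_iff_index_eq)
  then have dst: "distinct (st xs)" by (auto simp: distinct_conv_nth)
  have "set (st xs) \<subseteq> {1..length xs}"
  proof
    fix v assume "v \<in> set (st xs)"
    then obtain i where i: "i < length xs" "v = st xs ! i" by (auto simp: in_set_conv_nth)
    have "xs ! i \<in> {y \<in> set xs. y \<le> xs ! i}" using i by auto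
    then have "1 \<le> card {y \<in> set xs. y \<le> xs ! i}" by (simp add: card_gt_0_iff Suc_le_eq) blast
    moreover have "card {y \<in> set xs. y \<le> xs ! i} \<le> card (set xs)" by (rule card_mono) auto
    ultimately show "v \<in> {1..length xs}" using i d by (simp add: nth_st distinct_card)
  qed
  moreover have "card (set (st xs)) = length xs" using dst by (simp add: distinct_card)
  ultimately have "set (st xs) = {1..length xs}" by (intro card_subset_eq) auto
  then show ?thesis using dst by (simp add: is_perm_def)
qed

lemma st_shift:
  assumes d: "distinct xs" and s: "set xs = {q + 1..q + length xs}"
  shows "map (\<lambda>x. x + q) (st xs) = xs"
proof (rule nth_equalityI)
  fix i assume i: "i < length (map (\<lambda>x. x + q) (st xs))"
  then have xi: "xs ! i \<in> {q + 1..q + length xs}" using s nth_mem by fastforce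
  have "{y \<in> set xs. y \<le> xs ! i} = {q + 1..xs ! i}" using s xi by auto
  then show "map (\<lambda>x. x + q) (st xs) ! i = xs ! i" using i xi by (simp add: nth_st)
qed simp

lemma st_perm: "is_perm xs \<Longrightarrow> st xs = xs"
  using st_shift[of xs 0] by (simp add: is_perm_def)

lemma Inv_st: "Inv (st xs) = Inv xs"
  unfolding Inv_def using st_less_iff by auto

lemma Inv_take: "Inv (take p u) = {(i, j) \<in> Inv u. j < p}"
  unfolding Inv_def by auto

lemma Inv_drop: "Inv (drop p u) = {(i, j). (i + p, j + p) \<in> Inv u}"
  unfolding Inv_def by (auto simp: add.commute)

lemma Inv_over:
  assumes a: "is_perm a" and b: "is_perm b"
  shows "(i, j) \<in> Inv (over a b) \<longleftrightarrow> i < j \<and> j < length a + length b \<and>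
     (j < length a \<longrightarrow> (i, j) \<in> Inv a) \<and> (length a \<le> i \<longrightarrow> (i - length a, j - length a) \<in> Inv b)"
proof (cases "j < length a")
  case True
  then show ?thesis by (auto simp: Inv_def nth_over_left)
next
  case j: False
  show ?thesis
  proof (cases "length a \<le> i")
    case True
    then show ?thesis using j by (auto simp: Inv_def nth_over_right)
  next
    case False
    have "b ! (j - length a) \<le> length b" if "j < length a + length b"
      using perm_nth_bounds[OF b] that j by auto
    moreover have "1 \<le> a ! i" using perm_nth_bounds[OF a] False by auto
    ultimately show ?thesis using False j by (auto simp: Inv_def nth_over_left nth_over_right)
  qed
qed

lemma weak_le_over_iff:
  assumes u: "is_perm u" and a: "is_perm a" and b: "is_perm b"
    and len: "length u = length a + length b"
  shows "weak_le u (over a b) \<longleftrightarrow>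
    weak_le (st (take (length a) u)) a \<and> weak_le (st (drop (length a) u)) b"
proof -
  let ?p = "length a"
  have "Inv u \<subseteq> Inv (over a b) \<longleftrightarrow> Inv (take ?p u) \<subseteq> Inv a \<and> Inv (drop ?p u) \<subseteq> Inv b"
  proof
    assume H: "Inv u \<subseteq> Inv (over a b)"
    show "Inv (take ?p u) \<subseteq> Inv a \<and> Inv (drop ?p u) \<subseteq> Inv b"
    proof
      show "Inv (take ?p u) \<subseteq> Inv a"
        using H by (force simp: Inv_take Inv_over[OF a b])
      show "Inv (drop ?p u) \<subseteq> Inv b"
        using H by (force simp: Inv_drop Inv_over[OF a b])
    qed
  next
    assume H: "Inv (take ?p u) \<subseteq> Inv a \<and> Inv (drop ?p u) \<subseteq> Inv b"
    show "Inv u \<subseteq> Inv (over a b)"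
    proof safe
      fix i j assume ij: "(i, j) \<in> Inv u"
      then have "i < j" "j < length u" by (auto simp: Inv_def)
      moreover have "j < ?p \<Longrightarrow> (i, j) \<in> Inv a" using H ij by (auto simp: Inv_take)
      moreover have "(i - ?p, j - ?p) \<in> Inv b" if "?p \<le> i"
        using H ij that \<open>i < j\<close> by (auto simp: Inv_drop)
      ultimately show "(i, j) \<in> Inv (over a b)" using len by (simp add: Inv_over[OF a b])
    qed
  qed
  moreover have "distinct u" using u by (simp add: is_perm_def)
  then have "is_perm (st (take ?p u))" "is_perm (st (drop ?p u))"
    by (simp_all add: is_perm_st)
  ultimately show ?thesis
    using u a b len is_perm_over[OF a b] by (simp add: weak_le_def Inv_st)
qed

section \<open>Global descents\<close>

lemma mem_GDes_iff:
  "p \<in> GDes w \<longleftrightarrow> 0 < p \<and> p < length w \<and> (\<forall>i<p. \<forall>j. p \<le> j \<and> j < length w \<longrightarrow> w ! j < w ! i)"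
proof -
  have "(\<forall>i j. 1 \<le> i \<and> i \<le> p \<and> p < j \<and> j \<le> length w \<longrightarrow> w ! (i - 1) > w ! (j - 1)) \<longleftrightarrow>
        (\<forall>i<p. \<forall>j. p \<le> j \<and> j < length w \<longrightarrow> w ! j < w ! i)"
  proof safe
    fix i j
    assume H: "\<forall>i j. 1 \<le> i \<and> i \<le> p \<and> p < j \<and> j \<le> length w \<longrightarrow> w ! (i - 1) > w ! (j - 1)"
      and "i < p" "p \<le> j" "j < length w"
    then show "w ! j < w ! i" using H[rule_format, of "i + 1" "j + 1"] by simp
  next
    fix i j
    assume H: "\<forall>i<p. \<forall>j. p \<le> j \<and> j < length w \<longrightarrow> w ! j < w ! i"
      and "1 \<le> i" "i \<le> p" "p < j" "j \<le> length w"
    then show "w ! (i - 1) > w ! (j - 1)" by (intro H[rule_format]) auto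
  qed
  then show ?thesis unfolding GDes_def by auto
qed

lemma GDes_bounds: "p \<in> GDes w \<Longrightarrow> 0 < p \<and> p < length w"
  by (simp add: mem_GDes_iff)

lemma finite_GDes: "finite (GDes w)"
  unfolding GDes_def by auto

lemma GDes_Nil [simp]: "GDes [] = {}"
  by (simp add: mem_GDes_iff set_eq_iff)

lemma GDes_over_length:
  assumes a: "is_perm a" "a \<noteq> []" and b: "is_perm b" "b \<noteq> []"
  shows "length a \<in> GDes (over a b)"
  unfolding mem_GDes_iff
proof (intro conjI allI impI)
  fix i j assume ij: "i < length a" "length a \<le> j \<and> j < length (over a b)"
  have "over a b ! j \<le> length b"
    using ij perm_nth_bounds[OF b(1), of "j - length a"] by (auto simp: nth_over_right)
  also have "\<dots> < over a b ! i"
    using ij perm_nth_bounds[OF a(1), of i] by (simp add: nth_over_left)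
  finally show "over a b ! j < over a b ! i" .
qed (use a b in auto)

lemma GDes_over_shift_iff:
  assumes a: "is_perm a" and b: "is_perm b" and g: "0 < g"
  shows "g + length a \<in> GDes (over a b) \<longleftrightarrow> g \<in> GDes b"
proof
  assume gd: "g + length a \<in> GDes (over a b)"
  show "g \<in> GDes b"
    unfolding mem_GDes_iff
  proof (intro conjI allI impI)
    fix i j assume "i < g" "g \<le> j \<and> j < length b"
    then have "over a b ! (j + length a) < over a b ! (i + length a)"
      using gd unfolding mem_GDes_iff by simp
    then show "b ! j < b ! i" by (simp add: nth_over_right)
  qed (use g gd in \<open>auto simp: mem_GDes_iff\<close>)
next
  assume gd: "g \<in> GDes b"
  show "g + length a \<in> GDes (over a b)"
    unfolding mem_GDes_iff
  proof (intro conjI allI impI)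
    fix i j assume i: "i < g + length a" and j: "g + length a \<le> j \<and> j < length (over a b)"
    have oj: "over a b ! j = b ! (j - length a)" "j - length a < length b"
      using j by (auto simp: nth_over_right)
    show "over a b ! j < over a b ! i"
    proof (cases "i < length a")
      case True
      then show ?thesis
        using oj j perm_nth_bounds[OF a, of i] perm_nth_bounds[OF b, of "j - length a"]
        by (simp add: nth_over_left)
    next
      case False
      have desc: "\<forall>i<g. \<forall>j. g \<le> j \<and> j < length b \<longrightarrow> b ! j < b ! i"
        using gd by (simp add: mem_GDes_iff)
      have "b ! (j - length a) < b ! (i - length a)"
        using False i j oj(2) by (intro desc[rule_format]) auto
      then show ?thesis
        using oj False by (simp add: nth_over_right)
    qed
  qed (use g gd in \<open>auto simp: mem_GDes_iff\<close>)
qed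

text \<open>All letters after a global descent are smaller than all letters before it, so they are the
  smallest ones.\<close>

lemma set_drop_GDes:
  assumes w: "is_perm w" and p: "p \<in> GDes w"
  shows "set (drop p w) = {1..length w - p}"
proof -
  have dw: "distinct w" using w by (simp add: is_perm_def)
  have "x \<in> {1..length w - p}" if x: "x \<in> set (drop p w)" for x
  proof -
    obtain k where "k < length w - p" "x = w ! (p + k)"
      using x by (auto simp: in_set_conv_nth)
    then obtain j where j: "p \<le> j" "j < length w" "x = w ! j"
      by (intro that[of "p + k"]) auto
    have "{y \<in> set w. y \<le> x} \<subseteq> set (drop p w)"
    proof
      fix y assume "y \<in> {y \<in> set w. y \<le> x}"
      then obtain i where "i < length w" "y = w ! i" "y \<le> x" by (auto simp: in_set_conv_nth)
      moreover have "\<not> i < p"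
      proof
        assume "i < p"
        then have "w ! j < w ! i" using p j unfolding mem_GDes_iff by blast
        then show False using calculation j by simp
      qed
      ultimately show "y \<in> set (drop p w)" by (auto simp: in_set_conv_nth intro!: exI[of _ "i - p"])
    qed
    then have "card {y \<in> set w. y \<le> x} \<le> length w - p"
      using card_mono[of "set (drop p w)"] dw by (simp add: distinct_card)
    moreover have "{y \<in> set w. y \<le> x} = {1..x}"
      using w j perm_nth_bounds[OF w, of j] by (auto simp: is_perm_def)
    ultimately show ?thesis using perm_nth_bounds[OF w, of j] j by simp
  qed
  then show ?thesis
    using dw by (intro card_subset_eq) (auto simp: distinct_card)
qed

lemma over_st_take_st_drop_GDes:
  assumes w: "is_perm w" and p: "p \<in> GDes w"
  shows "over (st (take p w)) (st (drop p w)) = w"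
proof -
  let ?q = "length w - p"
  have dw: "distinct w" using w by (simp add: is_perm_def)
  have drop: "set (drop p w) = {1..?q}" by (rule set_drop_GDes[OF w p])
  have "set (take p w) \<union> set (drop p w) = {1..length w}"
    using w by (metis is_perm_def set_append append_take_drop_id)
  moreover have "set (take p w) \<inter> set (drop p w) = {}"
    using dw by (metis distinct_append append_take_drop_id)
  ultimately have "set (take p w) = {1..length w} - {1..?q}"
    using drop by blast
  also have "\<dots> = {?q + 1..?q + length (take p w)}"
    using p by (auto simp: mem_GDes_iff)
  finally have take: "set (take p w) = {?q + 1..?q + length (take p w)}" .
  have "st (drop p w) = drop p w"
    using dw drop by (intro st_perm) (simp add: is_perm_def)
  moreover have "map (\<lambda>x. x + ?q) (st (take p w)) = take p w"
    using dw take by (intro st_shift) auto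
  ultimately show ?thesis by (simp add: over_def)
qed

lemma card_GDes_over_list:
  assumes "\<forall>a\<in>set t. is_perm a \<and> a \<noteq> []"
  shows "length t - 1 \<le> card (GDes (over_list t))"
  using assms
proof (induction t)
  case (Cons a t)
  show ?case
  proof (cases "t = []")
    case False
    let ?w = "over_list t"
    have a: "is_perm a" "a \<noteq> []" and w: "is_perm ?w" "?w \<noteq> []"
      using Cons.prems False is_perm_over_list by (auto simp: over_def neq_Nil_conv)
    let ?D = "insert (length a) ((\<lambda>g. g + length a) ` GDes ?w)"
    have "length a \<notin> (\<lambda>g. g + length a) ` GDes ?w"
      using GDes_bounds by fastforce
    then have card_D: "card ?D = Suc (card (GDes ?w))"
      using finite_GDes by (simp add: card_image)
    have "?D \<subseteq> GDes (over a ?w)"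
      using GDes_over_length[OF a w] GDes_over_shift_iff[OF a(1) w(1)] GDes_bounds by auto
    then have "Suc (card (GDes ?w)) \<le> card (GDes (over a ?w))"
      using card_mono[OF finite_GDes] card_D by metis
    then show ?thesis using Cons False by simp
  qed simp
qed simp

lemma GDes_st_drop:
  assumes w: "is_perm w" and p: "p \<in> GDes w" and g: "g \<in> GDes w" "p < g"
  shows "g - p \<in> GDes (st (drop p w))"
proof -
  let ?a = "st (take p w)" and ?b = "st (drop p w)"
  have "distinct w" using w by (simp add: is_perm_def)
  then have ab: "is_perm ?a" "is_perm ?b" by (simp_all add: is_perm_st)
  have "g - p + length ?a = g" using GDes_bounds[OF p] g(2) by simp
  then have "g - p + length ?a \<in> GDes (over ?a ?b)"
    using g(1) unfolding over_st_take_st_drop_GDes[OF w p] by simp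
  then show ?thesis
    using GDes_over_shift_iff[OF ab] g(2) zero_less_diff by blast
qed

lemma over_list_of_GDes_subset:
  assumes "is_perm w" "w \<noteq> []" "G \<subseteq> GDes w" "card G = m"
  shows "\<exists>t. length t = m + 1 \<and> (\<forall>a\<in>set t. is_perm a \<and> a \<noteq> []) \<and> over_list t = w"
  using assms
proof (induction m arbitrary: w G)
  case 0
  then show ?case by (intro exI[of _ "[w]"]) auto
next
  case (Suc m)
  have fG: "finite G" using Suc.prems finite_GDes finite_subset by blast
  define p where "p = Min G"
  have "G \<noteq> {}" using Suc.prems(4) by auto
  then have p: "p \<in> G" "\<And>g. g \<in> G \<Longrightarrow> p \<le> g"
    using fG by (auto simp: p_def)
  then have pw: "p \<in> GDes w" "0 < p" "p < length w"
    using Suc.prems(3) GDes_bounds by auto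
  define a where "a = st (take p w)"
  define b where "b = st (drop p w)"
  have dw: "distinct w" using Suc.prems(1) by (simp add: is_perm_def)
  have ab: "is_perm a" "a \<noteq> []" "length a = p" "is_perm b" "b \<noteq> []"
    using dw pw by (auto simp: a_def b_def is_perm_st)
  have w: "w = over a b"
    unfolding a_def b_def using over_st_take_st_drop_GDes[OF Suc.prems(1) pw(1)] by simp
  define G' where "G' = (\<lambda>g. g - p) ` (G - {p})"
  have "G' \<subseteq> GDes b"
    using GDes_st_drop[OF Suc.prems(1) pw(1)] p(2) Suc.prems(3)
    unfolding G'_def b_def by (force simp: le_neq_implies_less)
  moreover have "inj_on (\<lambda>g. g - p) (G - {p})"
    using p(2) by (force simp: inj_on_def)
  then have "card G' = m"
    using p Suc.prems(4) fG unfolding G'_def by (simp add: card_image)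
  ultimately obtain t where "length t = m + 1" "\<forall>c\<in>set t. is_perm c \<and> c \<noteq> []" "over_list t = b"
    using Suc.IH[OF ab(4) ab(5)] by blast
  then show ?case using ab w by (intro exI[of _ "a # t"]) auto
qed

section \<open>The iterated coproduct in monomial coordinates\<close>

definition M_coord_tensor :: "(nat list list \<Rightarrow> rat) \<Rightarrow> nat list list \<Rightarrow> rat" where
  "M_coord_tensor = zeta_transform (list_all2 weak_le)"

definition coprod_F :: "nat list \<Rightarrow> nat list list \<Rightarrow> rat" where
  "coprod_F u = (\<Sum>p\<in>{0..length u}. FF [st (take p u), st (drop p u)])"

lemma coprod_eq_linext: "coprod = linext coprod_F"
  unfolding coprod_def coprod_F_def by (simp add: sum_fun_apply[abs_def])

lemma sum_splittings_weak_le_over: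
  assumes u: "is_perm u" and a: "is_perm a" and b: "is_perm b"
  shows "(\<Sum>p\<in>{0..length u}. of_bool (weak_le (st (take p u)) a \<and> weak_le (st (drop p u)) b))
    = (of_bool (weak_le u (over a b)) :: rat)"
proof (cases "length u = length a + length b")
  case True
  have "(\<Sum>p\<in>{0..length u}. of_bool (weak_le (st (take p u)) a \<and> weak_le (st (drop p u)) b))
      = (\<Sum>p\<in>{0..length u}. if p = length a
           then of_bool (weak_le (st (take p u)) a \<and> weak_le (st (drop p u)) b) else (0::rat))"
    by (intro sum.cong refl) (auto dest: weak_leD)
  also have "\<dots> = of_bool (weak_le u (over a b))"
    using True weak_le_over_iff[OF u a b True] by simp
  finally show ?thesis .
next
  case False
  then show ?thesis by (auto dest!: weak_leD intro!: sum.neutral)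
qed

lemma id_tensor_coprod_basis_Nil: "id_tensor_coprod_basis [] = 0"
  by (simp add: id_tensor_coprod_basis_def fun_eq_iff)

lemma id_tensor_coprod_basis_eq:
  assumes r: "r \<noteq> []"
  shows "id_tensor_coprod_basis r =
    (\<Sum>p\<in>{0..length (last r)}. FF (butlast r @ [st (take p (last r)), st (drop p (last r))]))"
proof
  fix s
  let ?u = "last r" and ?B = "butlast r"
  have split: "s = ?B @ [x, y] \<longleftrightarrow>
      length s = length r + 1 \<and> take (length r - 1) s = ?B \<and> drop (length r - 1) s = [x, y]" for x y
    using r by (auto simp: append_eq_conv_conj) (metis append_take_drop_id)
  show "id_tensor_coprod_basis r s = (\<Sum>p\<in>{0..length ?u}. FF (?B @ [st (take p ?u), st (drop p ?u)])) s"
    using r by (auto simp: id_tensor_coprod_basis_def coprod_eq_linext coprod_F_def sum_fun_apply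
        FF_apply split intro!: sum.cong sum.neutral)
qed

lemma finite_support_id_tensor_coprod_basis: "finite {s. id_tensor_coprod_basis r s \<noteq> 0}"
  by (cases "r = []") (simp_all add: id_tensor_coprod_basis_Nil id_tensor_coprod_basis_eq finite_support_sum)

lemma id_tensor_coprod_basis_support:
  assumes nz: "id_tensor_coprod_basis r s \<noteq> 0" and r: "\<forall>a\<in>set r. is_perm a"
  shows "length s = length r + 1 \<and> (\<forall>a\<in>set s. is_perm a)"
proof -
  have ne: "r \<noteq> []" using nz by (auto simp: id_tensor_coprod_basis_Nil)
  then obtain p where "FF (butlast r @ [st (take p (last r)), st (drop p (last r))]) s \<noteq> 0"
    using nz by (auto simp: id_tensor_coprod_basis_eq sum_fun_apply elim: sum.not_neutral_contains_not_neutral)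
  then have s: "s = butlast r @ [st (take p (last r)), st (drop p (last r))]"
    by (auto simp: FF_apply split: if_splits)
  have "distinct (last r)" using ne r by (simp add: is_perm_def)
  then show ?thesis
    using s ne r by (auto simp: is_perm_st dest: in_set_butlastD)
qed

lemma M_coord_tensor_id_tensor_coprod_basis:
  assumes r: "r \<noteq> []" "\<forall>a\<in>set r. is_perm a" and a: "is_perm a" and b: "is_perm b"
  shows "M_coord_tensor (id_tensor_coprod_basis r) (T @ [a, b]) =
    of_bool (list_all2 weak_le r (T @ [over a b]))"
proof -
  let ?u = "last r" and ?B = "butlast r"
  have u: "is_perm ?u" using r by simp
  have "M_coord_tensor (id_tensor_coprod_basis r) (T @ [a, b]) =
      (\<Sum>p\<in>{0..length ?u}. of_bool (list_all2 weak_le (?B @ [st (take p ?u), st (drop p ?u)]) (T @ [a, b])))"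
    unfolding id_tensor_coprod_basis_eq[OF r(1)] M_coord_tensor_def zeta_transform_def
    by (subst linext_sum) (auto simp: sum_fun_apply)
  also have "\<dots> = of_bool (list_all2 weak_le r (T @ [over a b]))"
  proof (cases "length ?B = length T")
    case True
    have "(\<Sum>p\<in>{0..length ?u}. of_bool (list_all2 weak_le (?B @ [st (take p ?u), st (drop p ?u)]) (T @ [a, b])))
        = (of_bool (list_all2 weak_le ?B T) :: rat) *
          (\<Sum>p\<in>{0..length ?u}. of_bool (weak_le (st (take p ?u)) a \<and> weak_le (st (drop p ?u)) b))"
      using True by (simp add: list_all2_append sum_distrib_left of_bool_conj)
    also have "\<dots> = of_bool (list_all2 weak_le (?B @ [?u]) (T @ [over a b]))"
      using True by (simp add: sum_splittings_weak_le_over[OF u a b] list_all2_append)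
    finally show ?thesis using r by simp
  next
    case False
    then show ?thesis
      using r by (auto simp: list_all2_append dest: list_all2_lengthD)
  qed
  finally show ?thesis .
qed

lemma length_eq_2E:
  assumes "length t = 2"
  obtains a b where "t = [a, b]"
  using assms by (metis One_nat_def Suc_1 length_0_conv length_Suc_conv)

lemma support_iter_coprod_0: "{t. iter_coprod 0 x t \<noteq> 0} \<subseteq> (\<lambda>a. [a]) ` {a. x a \<noteq> 0}"
proof
  fix t assume "t \<in> {t. iter_coprod 0 x t \<noteq> 0}"
  then show "t \<in> (\<lambda>a. [a]) ` {a. x a \<noteq> 0}"
    by (cases t rule: list.exhaust; cases "tl t") auto
qed

lemma linext_iter_coprod_0:
  assumes x: "finite {a. x a \<noteq> 0}"
  shows "linext f (iter_coprod 0 x) = linext (\<lambda>a. f [a]) x"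
proof
  fix b
  let ?A = "(\<lambda>a. [a]) ` {a. x a \<noteq> 0}"
  have "linext f (iter_coprod 0 x) b = (\<Sum>t\<in>?A. iter_coprod 0 x t * f t b)"
    using x support_iter_coprod_0 by (intro linext_eq_sum_superset) auto
  also have "\<dots> = linext (\<lambda>a. f [a]) x b"
    by (subst sum.reindex) (auto simp: inj_on_def linext_def)
  finally show "linext f (iter_coprod 0 x) b = linext (\<lambda>a. f [a]) x b" .
qed

lemma iter_coprod_1:
  assumes x: "x \<in> SSym"
  shows "iter_coprod 1 x = coprod x"
proof -
  have "iter_coprod 1 x = linext id_tensor_coprod_basis (iter_coprod 0 x)"
    by simp
  also have "\<dots> = linext (\<lambda>a. id_tensor_coprod_basis [a]) x"
    by (rule linext_iter_coprod_0[OF SSym_finite_support[OF x]])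
  also have "(\<lambda>a. id_tensor_coprod_basis [a]) = coprod_F"
    by (simp add: fun_eq_iff id_tensor_coprod_basis_eq coprod_F_def)
  finally show ?thesis by (simp add: coprod_eq_linext)
qed

lemma iter_coprod_in_tensor_pow:
  assumes x: "x \<in> SSym"
  shows "iter_coprod k x \<in> tensor_pow (k + 1)"
proof (induction k)
  case 0
  show ?case
    using support_iter_coprod_0[of x] SSym_finite_support[OF x] SSym_support_perm[OF x]
    by (auto simp: tensor_pow_def intro: finite_subset)
next
  case (Suc k)
  let ?y = "iter_coprod k x"
  have y: "finite {t. ?y t \<noteq> 0}" "\<And>t. ?y t \<noteq> 0 \<Longrightarrow> length t = k + 1 \<and> (\<forall>a\<in>set t. is_perm a)"
    using Suc by (simp_all add: tensor_pow_def)
  have "finite {s. iter_coprod (Suc k) x s \<noteq> 0}"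
    using y(1) finite_support_id_tensor_coprod_basis by (simp add: finite_support_linext)
  moreover have "length s = Suc k + 1 \<and> (\<forall>a\<in>set s. is_perm a)" if "iter_coprod (Suc k) x s \<noteq> 0" for s
  proof -
    have "linext id_tensor_coprod_basis ?y s \<noteq> 0" using that by simp
    then obtain r where "?y r \<noteq> 0" "id_tensor_coprod_basis r s \<noteq> 0"
      by (rule linext_nonzeroE)
    then show ?thesis using y(2) id_tensor_coprod_basis_support by fastforce
  qed
  ultimately show ?case by (simp add: tensor_pow_def)
qed

text \<open>This is the coproduct formula of Aguiar and Sottile in the monomial basis; the induction
  splits only the last tensor factor.\<close>

lemma M_coord_tensor_iter_coprod:
  assumes x: "x \<in> SSym" and t: "length t = k + 1" "\<forall>a\<in>set t. is_perm a"
  shows "M_coord_tensor (iter_coprod k x) t = M_coord x (over_list t)"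
  using t
proof (induction k arbitrary: t)
  case 0
  then obtain a where "t = [a]" by (cases t) auto
  then show ?case
    unfolding M_coord_tensor_def zeta_transform_def linext_iter_coprod_0[OF SSym_finite_support[OF x]]
    by (simp add: M_coord_eq_zeta_transform[OF SSym_finite_support[OF x]] zeta_transform_def linext_def)
next
  case (Suc k)
  let ?y = "iter_coprod k x"
  have "length (drop k t) = 2" using Suc.prems(1) by simp
  then obtain a b where "drop k t = [a, b]" by (rule length_eq_2E)
  then obtain T where t: "t = T @ [a, b]" by (metis append_take_drop_id)
  have ab: "is_perm a" "is_perm b" and T: "\<forall>c\<in>set T. is_perm c"
    using Suc.prems(2) t by auto
  have y: "finite {r. ?y r \<noteq> 0}" "\<And>r. ?y r \<noteq> 0 \<Longrightarrow> r \<noteq> [] \<and> (\<forall>c\<in>set r. is_perm c)"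
    using iter_coprod_in_tensor_pow[OF x, of k] by (auto simp: tensor_pow_def)
  have "M_coord_tensor (iter_coprod (Suc k) x) t =
      linext (\<lambda>r. M_coord_tensor (id_tensor_coprod_basis r)) ?y t"
    unfolding M_coord_tensor_def zeta_transform_def iter_coprod.simps
    using y(1) finite_support_id_tensor_coprod_basis by (subst linext_comp) auto
  also have "\<dots> = (\<Sum>r | ?y r \<noteq> 0. ?y r * of_bool (list_all2 weak_le r (T @ [over a b])))"
    unfolding linext_def using y(2) ab
    by (intro sum.cong refl) (simp add: t M_coord_tensor_id_tensor_coprod_basis)
  also have "\<dots> = M_coord_tensor ?y (T @ [over a b])"
    by (simp add: M_coord_tensor_def zeta_transform_def linext_def)
  also have "\<dots> = M_coord x (over_list t)"
    using Suc.IH[of "T @ [over a b]"] Suc.prems(1) t T ab is_perm_over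
    by (simp add: over_list_append_over)
  finally show ?case .
qed

section \<open>The coradical filtration\<close>

definition nonunit_tuples :: "nat \<Rightarrow> nat list list set" where
  "nonunit_tuples m = {t. length t = m \<and> (\<forall>a\<in>set t. is_perm a \<and> a \<noteq> [])}"

lemma over_list_image_nonunit_tuples:
  assumes k: "1 \<le> k"
  shows "over_list ` nonunit_tuples (k + 1) = {w. is_perm w \<and> k \<le> card (GDes w)}"
proof
  show "over_list ` nonunit_tuples (k + 1) \<subseteq> {w. is_perm w \<and> k \<le> card (GDes w)}"
    using card_GDes_over_list is_perm_over_list by (fastforce simp: nonunit_tuples_def)
  show "{w. is_perm w \<and> k \<le> card (GDes w)} \<subseteq> over_list ` nonunit_tuples (k + 1)"
  proof safe
    fix w assume w: "is_perm w" "k \<le> card (GDes w)"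
    then have "w \<noteq> []" using k by auto
    obtain G where "G \<subseteq> GDes w" "card G = k"
      using w(2) obtain_subset_with_card_n by metis
    then obtain t where "length t = k + 1" "\<forall>a\<in>set t. is_perm a \<and> a \<noteq> []" "over_list t = w"
      using over_list_of_GDes_subset[OF w(1) \<open>w \<noteq> []\<close>] by blast
    then show "w \<in> over_list ` nonunit_tuples (k + 1)"
      by (auto simp: nonunit_tuples_def)
  qed
qed

lemma slot_unit_vanishes:
  assumes "z \<in> slot_unit i j" "t ! i \<noteq> []"
  shows "z t = 0"
  using assms(1) unfolding slot_unit_def
proof (induction rule: Q.span_induct_alt)
  case (step c x y)
  then show ?case using assms(2) by (auto simp: FF_apply split: if_splits)
qed simp

lemma sum_first_unit_slot:
  assumes "\<exists>i\<le>k. t ! i = []"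
  shows "(\<Sum>i\<in>{0..k}. if t ! i = [] \<and> (\<forall>j<i. t ! j \<noteq> []) then c else 0) = (c :: rat)"
proof -
  define i0 where "i0 = (LEAST i. t ! i = [])"
  have i0: "t ! i0 = []" "i0 \<le> k" "\<And>j. j < i0 \<Longrightarrow> t ! j \<noteq> []"
    using assms LeastI_ex[of "\<lambda>i. t ! i = []"] Least_le[of "\<lambda>i. t ! i = []"] not_less_Least
    unfolding i0_def by (blast, fastforce, blast)
  have "t ! i = [] \<and> (\<forall>j<i. t ! j \<noteq> []) \<longleftrightarrow> i = i0" for i
    using i0 by (metis linorder_neqE_nat)
  then show ?thesis using i0(2) by simp
qed

lemma unit_sum_iff_vanishes_on_nonunit_tuples:
  assumes y: "y \<in> tensor_pow (k + 1)"
  shows "y \<in> unit_sum k \<longleftrightarrow> (\<forall>t\<in>nonunit_tuples (k + 1). y t = 0)"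
proof
  assume "y \<in> unit_sum k"
  then obtain Y where Y: "y = (\<lambda>t. \<Sum>i\<in>{0..k}. Y i t)" "\<forall>i\<in>{0..k}. Y i \<in> slot_unit i (k - i)"
    unfolding unit_sum_def by blast
  then show "\<forall>t\<in>nonunit_tuples (k + 1). y t = 0"
    by (auto simp: nonunit_tuples_def intro!: sum.neutral slot_unit_vanishes)
next
  assume vanish: "\<forall>t\<in>nonunit_tuples (k + 1). y t = 0"
  have supp: "finite {t. y t \<noteq> 0}" "\<And>t. y t \<noteq> 0 \<Longrightarrow> length t = k + 1 \<and> (\<forall>a\<in>set t. is_perm a)"
    using y by (auto simp: tensor_pow_def)
  define Y where "Y i t = (if t ! i = [] \<and> (\<forall>j<i. t ! j \<noteq> []) then y t else 0)" for i t
  have "Y i \<in> slot_unit i (k - i)" if "i \<in> {0..k}" for i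
  proof -
    have "Y i \<in> Q.span (FF ` {t. length t = i + (k - i) + 1 \<and> (\<forall>a\<in>set t. is_perm a) \<and> t ! i = []})"
      using that supp
      by (intro in_span_FF) (auto simp: Y_def intro: finite_subset[OF _ supp(1)] split: if_splits)
    then show ?thesis unfolding slot_unit_def by (simp add: setcompr_eq_image)
  qed
  moreover have "y t = (\<Sum>i\<in>{0..k}. Y i t)" for t
  proof (cases "y t = 0")
    case False
    then have "t \<notin> nonunit_tuples (k + 1)" using vanish by auto
    then have "\<exists>i\<le>k. t ! i = []"
      using supp(2)[OF False] by (auto simp: nonunit_tuples_def in_set_conv_nth less_Suc_eq_le)
    then show ?thesis unfolding Y_def by (rule sum_first_unit_slot[symmetric])
  qed (simp add: Y_def sum.neutral)
  ultimately show "y \<in> unit_sum k"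
    unfolding unit_sum_def by blast
qed

lemma M_coord_tensor_vanishes_iff:
  assumes y: "y \<in> tensor_pow m"
  shows "(\<forall>t\<in>nonunit_tuples m. M_coord_tensor y t = 0) \<longleftrightarrow> (\<forall>t\<in>nonunit_tuples m. y t = 0)"
  unfolding M_coord_tensor_def
proof (rule zeta_transform_vanishes_iff[where f = "\<lambda>s. \<Sum>a\<leftarrow>s. card (Inv a)"])
  show "finite {s. y s \<noteq> 0}" using y by (simp add: tensor_pow_def)
  show "list_all2 weak_le s t \<Longrightarrow> t \<in> nonunit_tuples m \<Longrightarrow> s \<in> nonunit_tuples m" for s t
    using list_all2_weak_le_perms[of s t] by (simp add: nonunit_tuples_def)
  show "t \<in> nonunit_tuples m \<Longrightarrow> list_all2 weak_le t t" for t
    by (simp add: nonunit_tuples_def list_all2_weak_le_refl)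
qed (rule list_all2_weak_le_card_Inv_less)

theorem coradical_eq:
  assumes k: "1 \<le> k"
  shows "coradical k = {x \<in> SSym. \<forall>w. M_coord x w \<noteq> 0 \<longrightarrow> card (GDes w) < k}"
proof -
  have "x \<in> coradical k \<longleftrightarrow> (\<forall>w. M_coord x w \<noteq> 0 \<longrightarrow> card (GDes w) < k)" if x: "x \<in> SSym" for x
  proof -
    let ?y = "iter_coprod k x"
    have y: "?y \<in> tensor_pow (k + 1)" by (rule iter_coprod_in_tensor_pow[OF x])
    have "x \<in> coradical k \<longleftrightarrow> (\<forall>t\<in>nonunit_tuples (k + 1). ?y t = 0)"
      using k x by (simp add: coradical_def unit_sum_iff_vanishes_on_nonunit_tuples[OF y])
    also have "\<dots> \<longleftrightarrow> (\<forall>t\<in>nonunit_tuples (k + 1). M_coord x (over_list t) = 0)"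
      using M_coord_tensor_iter_coprod[OF x] M_coord_tensor_vanishes_iff[OF y]
      by (auto simp: nonunit_tuples_def)
    also have "\<dots> \<longleftrightarrow> (\<forall>w\<in>over_list ` nonunit_tuples (k + 1). M_coord x w = 0)"
      by blast
    also have "\<dots> \<longleftrightarrow> (\<forall>w. is_perm w \<and> k \<le> card (GDes w) \<longrightarrow> M_coord x w = 0)"
      unfolding over_list_image_nonunit_tuples[OF k] by blast
    also have "\<dots> \<longleftrightarrow> (\<forall>w. M_coord x w \<noteq> 0 \<longrightarrow> card (GDes w) < k)"
      using M_coord_nonzero_imp_perm not_less by blast
    finally show ?thesis .
  qed
  moreover have "coradical k \<subseteq> SSym" using k by (auto simp: coradical_def)
  ultimately show ?thesis by blast
qed

section \<open>Primitive elements\<close>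

lemma coprod_nonzero_imp:
  assumes x: "x \<in> SSym" and nz: "coprod x t \<noteq> 0"
  shows "\<exists>a b. t = [a, b] \<and> is_perm a \<and> is_perm b"
proof -
  obtain v where v: "x v \<noteq> 0" "coprod_F v t \<noteq> 0"
    using nz unfolding coprod_eq_linext by (rule linext_nonzeroE)
  have "(\<Sum>p\<in>{0..length v}. FF [st (take p v), st (drop p v)] t) \<noteq> 0"
    using v(2) by (simp add: coprod_F_def sum_fun_apply)
  then obtain p where "FF [st (take p v), st (drop p v)] t \<noteq> 0"
    by (rule sum.not_neutral_contains_not_neutral)
  moreover have "distinct v" using SSym_support_perm[OF x v(1)] by (simp add: is_perm_def)
  ultimately show ?thesis by (auto simp: FF_apply is_perm_st split: if_splits)
qed

lemma coprod_F_unit_right: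
  assumes "is_perm v"
  shows "coprod_F v [a, []] = of_bool (v = a)"
proof -
  have "FF [st (take p v), st (drop p v)] [a, []] = (if p = length v then of_bool (v = a) else 0)"
    if "p \<in> {0..length v}" for p
    using that st_perm[OF assms] by (auto simp: FF_apply)
  then show ?thesis by (simp add: coprod_F_def sum_fun_apply)
qed

lemma coprod_F_unit_left:
  assumes "is_perm v"
  shows "coprod_F v [[], b] = of_bool (v = b)"
proof -
  have "FF [st (take p v), st (drop p v)] [[], b] = (if p = 0 then of_bool (v = b) else 0)"
    if "p \<in> {0..length v}" for p
    using that st_perm[OF assms] by (auto simp: FF_apply)
  then show ?thesis by (simp add: coprod_F_def sum_fun_apply)
qed

lemma coprod_unit_right:
  assumes x: "x \<in> SSym"
  shows "coprod x [a, []] = x a"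
proof -
  have "coprod x [a, []] = (\<Sum>v | x v \<noteq> 0. x v * of_bool (v = a))"
    unfolding coprod_eq_linext linext_def using SSym_support_perm[OF x]
    by (intro sum.cong refl) (simp add: coprod_F_unit_right)
  also have "\<dots> = x a"
    using SSym_finite_support[OF x] by (simp add: of_bool_def if_distrib cong: if_cong)
  finally show ?thesis .
qed

lemma coprod_unit_left:
  assumes x: "x \<in> SSym"
  shows "coprod x [[], b] = x b"
proof -
  have "coprod x [[], b] = (\<Sum>v | x v \<noteq> 0. x v * of_bool (v = b))"
    unfolding coprod_eq_linext linext_def using SSym_support_perm[OF x]
    by (intro sum.cong refl) (simp add: coprod_F_unit_left)
  also have "\<dots> = x b"
    using SSym_finite_support[OF x] by (simp add: of_bool_def if_distrib cong: if_cong)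
  finally show ?thesis .
qed

lemma coprod_vanishes_on_nonunit_tuples_iff:
  assumes x: "x \<in> SSym"
  shows "(\<forall>t\<in>nonunit_tuples 2. coprod x t = 0) \<longleftrightarrow>
    (\<forall>a b. a \<noteq> [] \<longrightarrow> b \<noteq> [] \<longrightarrow> coprod x [a, b] = 0)"
proof
  assume vanish: "\<forall>t\<in>nonunit_tuples 2. coprod x t = 0"
  show "\<forall>a b. a \<noteq> [] \<longrightarrow> b \<noteq> [] \<longrightarrow> coprod x [a, b] = 0"
  proof (intro allI impI, rule ccontr)
    fix a b assume "a \<noteq> []" "b \<noteq> []" and nz: "coprod x [a, b] \<noteq> 0"
    then have "[a, b] \<in> nonunit_tuples 2"
      using coprod_nonzero_imp[OF x nz] by (simp add: nonunit_tuples_def)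
    then show False using vanish nz by blast
  qed
next
  assume vanish: "\<forall>a b. a \<noteq> [] \<longrightarrow> b \<noteq> [] \<longrightarrow> coprod x [a, b] = 0"
  show "\<forall>t\<in>nonunit_tuples 2. coprod x t = 0"
  proof
    fix t assume t: "t \<in> nonunit_tuples 2"
    then have "length t = 2" by (simp add: nonunit_tuples_def)
    then obtain a b where "t = [a, b]" by (rule length_eq_2E)
    then show "coprod x t = 0" using vanish t by (simp add: nonunit_tuples_def)
  qed
qed

lemma primitive_iff:
  assumes x: "x \<in> SSym"
  shows "coprod x = (\<lambda>t. tensor2 x one t + tensor2 one x t) \<longleftrightarrow>
    x [] = 0 \<and> (\<forall>a b. a \<noteq> [] \<longrightarrow> b \<noteq> [] \<longrightarrow> coprod x [a, b] = 0)"
proof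
  assume prim: "coprod x = (\<lambda>t. tensor2 x one t + tensor2 one x t)"
  have "x [] = x [] + x []"
    using fun_cong[OF prim, of "[[], []]"] coprod_unit_right[OF x, of "[]"]
    by (simp add: tensor2_def one_def FF_apply)
  moreover have "coprod x [a, b] = 0" if "a \<noteq> []" "b \<noteq> []" for a b
    using that fun_cong[OF prim, of "[a, b]"] by (simp add: tensor2_def one_def FF_apply)
  ultimately show "x [] = 0 \<and> (\<forall>a b. a \<noteq> [] \<longrightarrow> b \<noteq> [] \<longrightarrow> coprod x [a, b] = 0)"
    by simp
next
  assume x0: "x [] = 0 \<and> (\<forall>a b. a \<noteq> [] \<longrightarrow> b \<noteq> [] \<longrightarrow> coprod x [a, b] = 0)"
  show "coprod x = (\<lambda>t. tensor2 x one t + tensor2 one x t)"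
  proof
    fix t
    show "coprod x t = tensor2 x one t + tensor2 one x t"
    proof (cases "\<exists>a b. t = [a, b]")
      case True
      then obtain a b where t: "t = [a, b]" by blast
      show ?thesis
        using x0 by (cases "a = []"; cases "b = []")
          (simp_all add: t tensor2_def one_def FF_apply coprod_unit_right[OF x] coprod_unit_left[OF x])
    next
      case False
      then show ?thesis
        using coprod_nonzero_imp[OF x, of t] by (auto simp: tensor2_def split: list.splits)
    qed
  qed
qed

text \<open>\<open>x []\<close> is the counit of \<open>x\<close>: the primitives are the elements of \<open>C\<^sup>(\<^sup>1\<^sup>)\<close> killed by it.\<close>

lemma primitives_eq: "primitives = {x \<in> coradical 1. x [] = 0}"
proof -
  have "x \<in> coradical 1 \<longleftrightarrow> (\<forall>a b. a \<noteq> [] \<longrightarrow> b \<noteq> [] \<longrightarrow> coprod x [a, b] = 0)"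
    if x: "x \<in> SSym" for x
  proof -
    have "x \<in> coradical 1 \<longleftrightarrow> iter_coprod 1 x \<in> unit_sum 1"
      using x by (simp add: coradical_def del: iter_coprod.simps)
    also have "\<dots> \<longleftrightarrow> (\<forall>t\<in>nonunit_tuples (1 + 1). iter_coprod 1 x t = 0)"
      by (rule unit_sum_iff_vanishes_on_nonunit_tuples[OF iter_coprod_in_tensor_pow[OF x]])
    also have "\<dots> \<longleftrightarrow> (\<forall>t\<in>nonunit_tuples 2. coprod x t = 0)"
      by (simp only: iter_coprod_1[OF x] one_add_one)
    finally show ?thesis
      using coprod_vanishes_on_nonunit_tuples_iff[OF x] by simp
  qed
  then show ?thesis
    using primitive_iff by (auto simp: primitives_def coradical_def)
qed

theorem coradical_basis:
  fixes k :: nat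
  defines "S \<equiv> {u. is_perm u \<and> length u \<ge> 1 \<and> int (card (GDes u)) \<le> int k - 1}"
  shows "one \<notin> MM ` S \<and> inj_on MM S \<and> Q.independent (insert one (MM ` S))
     \<and> Q.span (insert one (MM ` S)) = coradical k"
proof -
  have perms: "insert [] S \<subseteq> {u. is_perm u}" by (auto simp: S_def)
  have basis: "insert one (MM ` S) = MM ` insert [] S" by (simp add: MM_Nil)
  have inj: "inj_on MM (insert [] S)"
    using perms by (rule inj_on_subset[OF inj_on_MM])
  then have "one \<notin> MM ` S"
    unfolding MM_Nil[symmetric] by (simp add: S_def)
  moreover have "inj_on MM S" using inj by (rule inj_on_subset) auto
  moreover have "Q.independent (insert one (MM ` S))"
    unfolding basis using perms by (intro Q.independent_mono[OF independent_MM] image_mono)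
  moreover have "Q.span (insert one (MM ` S)) = coradical k"
  proof (cases "k = 0")
    case True
    then have "S = {}" by (auto simp: S_def)
    then show ?thesis
      using True by (auto simp: Q.span_singleton coradical_def coradical0_def)
  next
    case False
    then have k: "1 \<le> k" by simp
    have "w \<in> insert [] S \<longleftrightarrow> card (GDes w) < k" if "is_perm w" for w
      using that False by (cases w) (auto simp: S_def)
    then have "(\<forall>w. M_coord x w \<noteq> 0 \<longrightarrow> w \<in> insert [] S) \<longleftrightarrow>
        (\<forall>w. M_coord x w \<noteq> 0 \<longrightarrow> card (GDes w) < k)" for x
      using M_coord_nonzero_imp_perm by blast
    then show ?thesis
      unfolding basis span_MM[OF perms] coradical_eq[OF k] by simp
  qed
  ultimately show ?thesis by blast
qed

theorem primitives_basis:
  defines "P \<equiv> {u. is_perm u \<and> length u \<ge> 1 \<and> GDes u = {}}"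
  shows "inj_on MM P \<and> Q.independent (MM ` P) \<and> Q.span (MM ` P) = primitives"
proof -
  have perms: "P \<subseteq> {u. is_perm u}" by (auto simp: P_def)
  have P_iff: "w \<in> P \<longleftrightarrow> card (GDes w) < 1 \<and> w \<noteq> []" if "is_perm w" for w
    using that finite_GDes by (cases w) (auto simp: P_def)
  have "(\<forall>w. M_coord x w \<noteq> 0 \<longrightarrow> w \<in> P) \<longleftrightarrow>
      (\<forall>w. M_coord x w \<noteq> 0 \<longrightarrow> card (GDes w) < 1) \<and> M_coord x [] = 0" for x
    using P_iff M_coord_nonzero_imp_perm by blast
  then have "Q.span (MM ` P) = primitives"
    unfolding span_MM[OF perms] primitives_eq coradical_eq[OF order_refl] M_coord_Nil by blast
  moreover have "Q.independent (MM ` P)"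
    using perms by (intro Q.independent_mono[OF independent_MM] image_mono)
  ultimately show ?thesis
    using inj_on_subset[OF inj_on_MM perms] by blast
qed

theorem mainTheorem11:
  shows "(\<forall>k::nat.
            one \<notin> MM ` {u. is_perm u \<and> length u \<ge> 1 \<and> int (card (GDes u)) \<le> int k - 1}
          \<and> inj_on MM {u. is_perm u \<and> length u \<ge> 1 \<and> int (card (GDes u)) \<le> int k - 1}
          \<and> \<not> module.dependent scaleQ
               (insert one (MM ` {u. is_perm u \<and> length u \<ge> 1 \<and> int (card (GDes u)) \<le> int k - 1}))
          \<and> module.span scaleQ
               (insert one (MM ` {u. is_perm u \<and> length u \<ge> 1 \<and> int (card (GDes u)) \<le> int k - 1}))
            = coradical k)
       \<and> (inj_on MM {u. is_perm u \<and> length u \<ge> 1 \<and> GDes u = {}}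
          \<and> \<not> module.dependent scaleQ (MM ` {u. is_perm u \<and> length u \<ge> 1 \<and> GDes u = {}})
          \<and> module.span scaleQ (MM ` {u. is_perm u \<and> length u \<ge> 1 \<and> GDes u = {}}) = primitives)"
  using coradical_basis primitives_basis by simp

end
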